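(* For every block graph $G$, $\operatorname{cobox}(G)\le \operatorname{cothdim}(G)\le 2\operatorname{cobox}(G)$.
   Context: All graphs are finite and simple. A block is a maximal connected subgraph with no cut-vertex of its own; a block graph is a graph whose blocks are all complete. The co-boxicity $\operatorname{cobox}(G)$ is the boxicity of the complement of $G$; equivalently, the minimum number of co-interval subgraphs of $G$ whose edge sets have union $E(G)$, where a graph is co-interval if its vertices can be assigned closed real intervals such that two vertices are adjacent iff their intervals are disjoint. A threshold graph is a graph obtainable from a single vertex by repeatedly adding an isolated or a universal vertex. The threshold co-dimension $\operatorname{cothdim}(G)$ is the minimum number of threshold subgraphs of $G$ whose edge sets have union $E(G)$. *)

theory Defs
  imports Main "HOL-Library.Disjoint_Sets" Complex_Main
begin

definition graph :: "'a set \<Rightarrow> 'a set set \<Rightarrow> bool" where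
  "graph V E \<longleftrightarrow> finite V \<and> (\<forall>e\<in>E. \<exists>u v. u \<in> V \<and> v \<in> V \<and> u \<noteq> v \<and> e = {u, v})"

definition subgraph :: "'a set \<Rightarrow> 'a set set \<Rightarrow> 'a set \<Rightarrow> 'a set set \<Rightarrow> bool" where
  "subgraph W F V E \<longleftrightarrow> W \<subseteq> V \<and> F \<subseteq> E \<and> (\<forall>e\<in>F. e \<subseteq> W)"

definition reach :: "'a set \<Rightarrow> 'a set set \<Rightarrow> 'a \<Rightarrow> 'a \<Rightarrow> bool" where
  "reach W F x y \<longleftrightarrow> (\<lambda>a b. a \<in> W \<and> b \<in> W \<and> {a, b} \<in> F)\<^sup>*\<^sup>* x y"

definition connected_graph :: "'a set \<Rightarrow> 'a set set \<Rightarrow> bool" where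
  "connected_graph W F \<longleftrightarrow> W \<noteq> {} \<and> (\<forall>x\<in>W. \<forall>y\<in>W. reach W F x y)"

text \<open>v is a cut-vertex of (W, F) iff deleting v increases the number of components,
  i.e. some two other vertices connected in (W, F) become disconnected.\<close>
definition cut_vertex :: "'a set \<Rightarrow> 'a set set \<Rightarrow> 'a \<Rightarrow> bool" where
  "cut_vertex W F v \<longleftrightarrow> v \<in> W \<and>
     (\<exists>x\<in>W - {v}. \<exists>y\<in>W - {v}. reach W F x y \<and> \<not> reach (W - {v}) {e\<in>F. v \<notin> e} x y)"

definition nonsep :: "'a set \<Rightarrow> 'a set set \<Rightarrow> bool" where
  "nonsep W F \<longleftrightarrow> connected_graph W F \<and> (\<forall>v. \<not> cut_vertex W F v)"

definition block :: "'a set \<Rightarrow> 'a set set \<Rightarrow> 'a set \<Rightarrow> 'a set set \<Rightarrow> bool" where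
  "block V E W F \<longleftrightarrow> subgraph W F V E \<and> nonsep W F \<and>
     (\<forall>W' F'. subgraph W' F' V E \<and> nonsep W' F' \<and> W \<subseteq> W' \<and> F \<subseteq> F'
        \<longrightarrow> W' = W \<and> F' = F)"

definition complete_graph :: "'a set \<Rightarrow> 'a set set \<Rightarrow> bool" where
  "complete_graph W F \<longleftrightarrow> F = {{u, v} | u v. u \<in> W \<and> v \<in> W \<and> u \<noteq> v}"

definition block_graph :: "'a set \<Rightarrow> 'a set set \<Rightarrow> bool" where
  "block_graph V E \<longleftrightarrow> graph V E \<and> (\<forall>W F. block V E W F \<longrightarrow> complete_graph W F)"

definition cointerval :: "'a set \<Rightarrow> 'a set set \<Rightarrow> bool" where
  "cointerval W F \<longleftrightarrow> (\<exists>l r :: 'a \<Rightarrow> real. (\<forall>v\<in>W. l v \<le> r v) \<and>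
     (\<forall>u\<in>W. \<forall>v\<in>W. u \<noteq> v \<longrightarrow> ({u, v} \<in> F \<longleftrightarrow> {l u..r u} \<inter> {l v..r v} = {})))"

inductive threshold :: "'a set \<Rightarrow> 'a set set \<Rightarrow> bool" where
  single: "threshold {v} {}"
| isolated: "threshold W F \<Longrightarrow> v \<notin> W \<Longrightarrow> threshold (insert v W) F"
| universal: "threshold W F \<Longrightarrow> v \<notin> W \<Longrightarrow> threshold (insert v W) (F \<union> {{v, u} | u. u \<in> W})"

definition cobox :: "'a set \<Rightarrow> 'a set set \<Rightarrow> nat" where
  "cobox V E = (LEAST k. \<exists>HV HE. (\<forall>i<k. subgraph (HV i) (HE i) V E \<and> cointerval (HV i) (HE i))
                                  \<and> (\<Union>i<k. HE i) = E)"

definition cothdim :: "'a set \<Rightarrow> 'a set set \<Rightarrow> nat" where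
  "cothdim V E = (LEAST k. \<exists>HV HE. (\<forall>i<k. subgraph (HV i) (HE i) V E \<and> threshold (HV i) (HE i))
                                  \<and> (\<Union>i<k. HE i) = E)"

end

theory Submission
  imports Defs "HOL-Library.Product_Order"
begin

text \<open>Threshold graphs are co-interval, which gives the first inequality. For the second it suffices
  to cover the edges of a co-interval subgraph \<open>F\<close> of a block graph by two threshold subgraphs.
  Orient every edge \<open>uv\<close> of \<open>F\<close> so that the interval of \<open>u\<close> lies to the left of that of \<open>v\<close>.
  Let \<open>x\<close> be the left end whose interval ends first and \<open>y\<close> the right end whose interval starts
  last. Then \<open>uy\<close> and \<open>vx\<close> are edges of \<open>F\<close> for every edge \<open>uv\<close>, so either \<open>u = x\<close>, or
  \<open>v = y\<close>, or \<open>u v x y\<close> is a 4-cycle. A 4-cycle is 2-connected, hence lies in a block, which is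
  complete; so both of its chords are edges. Therefore \<open>F\<close> is covered by the star at \<open>y\<close>
  together with the star at \<open>x\<close> joined to the clique formed by \<open>y\<close> and the common neighbours
  of \<open>x\<close> and \<open>y\<close>; both are threshold graphs.\<close>

section \<open>Blocks and 4-cycles\<close>

lemma graph_edgeE:
  assumes "graph V E" "e \<in> E"
  obtains u v where "u \<in> V" "v \<in> V" "u \<noteq> v" "e = {u, v}"
  using assms unfolding graph_def by blast

lemma graph_edge_subset: "graph V E \<Longrightarrow> e \<in> E \<Longrightarrow> e \<subseteq> V"
  by (elim graph_edgeE) auto

lemma graph_edge_neq:
  assumes "graph V E" "{u, v} \<in> E"
  shows "u \<noteq> v"
  using assms by (elim graph_edgeE) (auto simp: doubleton_eq_iff)

lemma graph_finite_edges:
  assumes "graph V E"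
  shows "finite E"
proof -
  have "E \<subseteq> Pow V" using assms by (auto dest: graph_edge_subset)
  moreover have "finite V" using assms unfolding graph_def by simp
  ultimately show ?thesis by (simp add: finite_subset)
qed

lemma graph_subgraph:
  assumes "graph V E" "subgraph W F V E"
  shows "graph W F"
proof -
  have "W \<subseteq> V" "F \<subseteq> E" "\<forall>e\<in>F. e \<subseteq> W" using assms(2) unfolding subgraph_def by auto
  moreover have "finite V" using assms(1) unfolding graph_def by simp
  ultimately have "finite W" by (simp add: finite_subset)
  moreover have "\<exists>u v. u \<in> W \<and> v \<in> W \<and> u \<noteq> v \<and> e = {u, v}" if e: "e \<in> F" for e
  proof -
    obtain u v where "u \<noteq> v" "e = {u, v}" using graph_edgeE[OF assms(1)] \<open>F \<subseteq> E\<close> e by blast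
    moreover have "e \<subseteq> W" using \<open>\<forall>e\<in>F. e \<subseteq> W\<close> e by blast
    ultimately show ?thesis by blast
  qed
  ultimately show ?thesis unfolding graph_def by blast
qed

lemma reach_refl: "reach W F x x"
  by (simp add: reach_def)

lemma reach_edge: "a \<in> W \<Longrightarrow> b \<in> W \<Longrightarrow> {a, b} \<in> F \<Longrightarrow> reach W F a b"
  unfolding reach_def by (rule r_into_rtranclp) simp

lemma reach_trans: "reach W F a b \<Longrightarrow> reach W F b c \<Longrightarrow> reach W F a c"
  unfolding reach_def by (rule rtranclp_trans)

lemma reach_sym:
  assumes "reach W F a b"
  shows "reach W F b a"
proof -
  let ?R = "\<lambda>a b. a \<in> W \<and> b \<in> W \<and> {a, b} \<in> F"
  have "?R\<inverse>\<inverse> = ?R" by (auto simp: fun_eq_iff insert_commute)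
  moreover have "(?R\<inverse>\<inverse>)\<^sup>*\<^sup>* b a"
    using assms unfolding reach_def by (rule rtranclp_converseI)
  ultimately show ?thesis unfolding reach_def by simp
qed

lemma reach_path3:
  assumes "p \<in> W" "q \<in> W" "s \<in> W" "{p, q} \<in> F" "{q, s} \<in> F" "u \<in> {p, q, s}" "w \<in> {p, q, s}"
  shows "reach W F u w"
proof -
  have pq: "reach W F p q" and qs: "reach W F q s" using assms by (auto intro: reach_edge)
  have qp: "reach W F q p" and sq: "reach W F s q" using pq qs by (simp_all add: reach_sym)
  have ps: "reach W F p s" using pq qs by (rule reach_trans)
  have sp: "reach W F s p" using sq qp by (rule reach_trans)
  show ?thesis
    using assms(6,7) by (elim insertE emptyE) (simp_all add: pq qs qp sq ps sp reach_refl)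
qed

lemma nonsep_square:
  assumes "distinct [a, b, c, d]"
  shows "nonsep {a, b, c, d} {{a, b}, {b, c}, {c, d}, {d, a}}"
proof -
  let ?W = "{a, b, c, d}" and ?F = "{{a, b}, {b, c}, {c, d}, {d, a}}"
  have reach_a: "reach ?W ?F u a" if "u \<in> ?W" for u
  proof (cases "u = d")
    case True
    then show ?thesis by (auto intro: reach_edge)
  next
    case False
    then show ?thesis using that by (intro reach_path3[of a _ b c]) auto
  qed
  have "reach (?W - {v}) {e \<in> ?F. v \<notin> e} x y"
    if v: "v \<in> ?W" and xy: "x \<in> ?W - {v}" "y \<in> ?W - {v}" for v x y
  proof -
    consider "v = a" | "v = b" | "v = c" | "v = d" using v by blast
    then show ?thesis
    proof cases
      case 1
      then show ?thesis using assms xy by (intro reach_path3[of b _ c d]) auto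
    next
      case 2
      then show ?thesis using assms xy by (intro reach_path3[of c _ d a]) auto
    next
      case 3
      then show ?thesis using assms xy by (intro reach_path3[of d _ a b]) auto
    next
      case 4
      then show ?thesis using assms xy by (intro reach_path3[of a _ b c]) auto
    qed
  qed
  then have "\<not> cut_vertex ?W ?F v" for v
    unfolding cut_vertex_def by blast
  moreover have "connected_graph ?W ?F"
    unfolding connected_graph_def using reach_a by (blast intro: reach_trans reach_sym)
  ultimately show ?thesis unfolding nonsep_def by blast
qed

lemma nonsep_subgraph_within_block:
  assumes "graph V E" "subgraph W F V E" "nonsep W F"
  obtains W' F' where "block V E W' F'" "W \<subseteq> W'" "F \<subseteq> F'"
proof -
  let ?C = "{(W', F'). subgraph W' F' V E \<and> nonsep W' F'}"
  have "?C \<subseteq> Pow V \<times> Pow E" unfolding subgraph_def by auto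
  moreover have "finite V" using assms(1) unfolding graph_def by simp
  ultimately have "finite ?C"
    using graph_finite_edges[OF assms(1)] by (simp add: finite_subset)
  moreover have "(W, F) \<in> ?C" using assms(2,3) by simp
  ultimately obtain M where M: "M \<in> ?C" "(W, F) \<le> M" and maximal: "\<forall>B\<in>?C. M \<le> B \<longrightarrow> M = B"
    by (meson finite_has_maximal2)
  obtain W' F' where M_eq: "M = (W', F')" by fastforce
  have "block V E W' F'"
    unfolding block_def
  proof (intro conjI allI impI)
    show "subgraph W' F' V E" "nonsep W' F'" using M M_eq by auto
    fix W'' F'' assume "subgraph W'' F'' V E \<and> nonsep W'' F'' \<and> W' \<subseteq> W'' \<and> F' \<subseteq> F''"
    then have "(W'', F'') \<in> ?C" "M \<le> (W'', F'')" using M_eq by auto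
    then show "W'' = W'" "F'' = F'" using maximal M_eq by auto
  qed
  moreover have "W \<subseteq> W'" "F \<subseteq> F'" using M(2) M_eq by auto
  ultimately show ?thesis by (rule that)
qed

lemma block_graph_nonsep_adjacent:
  assumes "block_graph V E" "subgraph W F V E" "nonsep W F" "u \<in> W" "v \<in> W" "u \<noteq> v"
  shows "{u, v} \<in> E"
proof -
  have "graph V E" using assms(1) unfolding block_graph_def by simp
  then obtain W' F' where "block V E W' F'" "W \<subseteq> W'"
    using assms(2,3) by (rule nonsep_subgraph_within_block)
  moreover from this(1) have "complete_graph W' F'" "F' \<subseteq> E"
    using assms(1) unfolding block_graph_def block_def subgraph_def by auto
  ultimately show ?thesis using assms(4-6) unfolding complete_graph_def by blast
qed

lemma block_graph_square_chord:
  assumes "block_graph V E" "distinct [a, b, c, d]"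
    and "{a, b} \<in> E" "{b, c} \<in> E" "{c, d} \<in> E" "{d, a} \<in> E"
  shows "{a, c} \<in> E"
proof -
  have "graph V E" using assms(1) unfolding block_graph_def by simp
  then have "subgraph {a, b, c, d} {{a, b}, {b, c}, {c, d}, {d, a}} V E"
    using assms(3-6) unfolding subgraph_def by (auto dest: graph_edge_subset)
  then show ?thesis
    using assms(1,2) by (intro block_graph_nonsep_adjacent[OF _ _ nonsep_square]) auto
qed

section \<open>Threshold graphs\<close>

lemma threshold_finite: "threshold W F \<Longrightarrow> finite W"
  by (induction rule: threshold.induct) auto

lemma threshold_edges_subset: "threshold W F \<Longrightarrow> e \<in> F \<Longrightarrow> e \<subseteq> W"
  by (induction rule: threshold.induct) auto

lemma cointerval_insert_isolated:
  assumes "cointerval W F" "finite W" "\<And>w. {v, w} \<notin> F"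
  shows "cointerval (insert v W) F"
proof -
  obtain l r :: "'a \<Rightarrow> real" where lr: "\<forall>w\<in>W. l w \<le> r w"
    and adj: "\<forall>u\<in>W. \<forall>w\<in>W. u \<noteq> w \<longrightarrow> ({u, w} \<in> F \<longleftrightarrow> {l u..r u} \<inter> {l w..r w} = {})"
    using assms(1) unfolding cointerval_def by blast
  define L where "L = Min (insert 0 (l ` W))"
  define R where "R = Max (insert 0 (r ` W))"
  have L: "L \<le> l w" and R: "r w \<le> R" if "w \<in> W" for w
    using assms(2) that unfolding L_def R_def by auto
  have "L \<le> 0" "0 \<le> R" using assms(2) unfolding L_def R_def by simp_all
  then have "L \<le> R" by simp
  \<comment> \<open>The new vertex gets an interval containing all the others.\<close>
  let ?l = "l(v := L)" and ?r = "r(v := R)"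
  have "?l u \<le> ?r u" if "u \<in> insert v W" for u
    using that lr \<open>L \<le> R\<close> by auto
  moreover have "{u, w} \<in> F \<longleftrightarrow> {?l u..?r u} \<inter> {?l w..?r w} = {}"
    if uw: "u \<in> insert v W" "w \<in> insert v W" "u \<noteq> w" for u w
  proof (cases "u = v \<or> w = v")
    case True
    then obtain z where z: "z \<in> W" "{u, w} = {v, z}" "z \<noteq> v"
      using uw by (metis insert_commute insertE)
    then have "l z \<in> {?l u..?r u} \<inter> {?l w..?r w}"
      using L R lr by (fastforce simp: doubleton_eq_iff)
    then show ?thesis using assms(3) z(2) by auto
  next
    case False
    then show ?thesis using uw adj by auto
  qed
  ultimately show ?thesis unfolding cointerval_def by blast
qed

lemma cointerval_insert_universal:
  assumes "cointerval W F" "finite W" "v \<notin> W"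
  shows "cointerval (insert v W) (F \<union> {{v, u} | u. u \<in> W})"
proof -
  obtain l r :: "'a \<Rightarrow> real" where lr: "\<forall>w\<in>W. l w \<le> r w"
    and adj: "\<forall>u\<in>W. \<forall>w\<in>W. u \<noteq> w \<longrightarrow> ({u, w} \<in> F \<longleftrightarrow> {l u..r u} \<inter> {l w..r w} = {})"
    using assms(1) unfolding cointerval_def by blast
  define R where "R = Max (insert 0 (r ` W))"
  have R: "r w < R + 1" if "w \<in> W" for w
  proof -
    have "r w \<le> R" using assms(2) that unfolding R_def by simp
    then show ?thesis by simp
  qed
  \<comment> \<open>The new vertex gets a point to the right of all the other intervals.\<close>
  let ?l = "l(v := R + 1)" and ?r = "r(v := R + 1)" and ?F = "F \<union> {{v, u} | u. u \<in> W}"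
  have "?l u \<le> ?r u" if "u \<in> insert v W" for u
    using that lr by auto
  moreover have "{u, w} \<in> ?F \<longleftrightarrow> {?l u..?r u} \<inter> {?l w..?r w} = {}"
    if uw: "u \<in> insert v W" "w \<in> insert v W" "u \<noteq> w" for u w
  proof (cases "u = v \<or> w = v")
    case True
    then obtain z where z: "z \<in> W" "{u, w} = {v, z}" "z \<noteq> v"
      using uw by (metis insert_commute insertE)
    have "{?l v..?r v} \<inter> {?l z..?r z} = {}" using R[OF z(1)] z(3) by auto
    then have "{?l u..?r u} \<inter> {?l w..?r w} = {}"
      using z(2) by (auto simp: doubleton_eq_iff)
    moreover have "{u, w} \<in> ?F" using z by auto
    ultimately show ?thesis by simp
  next
    case False
    have "{u, w} \<notin> {{v, x} | x. x \<in> W}"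
    proof
      assume "{u, w} \<in> {{v, x} | x. x \<in> W}"
      then obtain x where "{u, w} = {v, x}" by blast
      then have "v \<in> {u, w}" by (metis insertI1)
      with False show False by blast
    qed
    then show ?thesis using False uw adj by auto
  qed
  ultimately show ?thesis
    unfolding cointerval_def by (intro exI[of _ ?l] exI[of _ ?r]) simp
qed

lemma threshold_cointerval: "threshold W F \<Longrightarrow> cointerval W F"
proof (induction rule: threshold.induct)
  case (single v)
  show ?case unfolding cointerval_def by auto
next
  case (isolated W F v)
  then show ?case
    by (intro cointerval_insert_isolated) (auto dest: threshold_finite threshold_edges_subset)
next
  case (universal W F v)
  then show ?case by (intro cointerval_insert_universal) (auto dest: threshold_finite)
qed

lemma threshold_union_isolated: "finite D \<Longrightarrow> threshold W F \<Longrightarrow> threshold (W \<union> D) F"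
proof (induction D rule: finite_induct)
  case (insert x D)
  then show ?case
    by (metis Un_insert_right insert_absorb threshold.isolated)
qed simp

definition clique_edges :: "'a set \<Rightarrow> 'a set set" where
  "clique_edges C = {{u, v} | u v. u \<in> C \<and> v \<in> C \<and> u \<noteq> v}"

lemma threshold_clique: "finite C \<Longrightarrow> C \<noteq> {} \<Longrightarrow> threshold C (clique_edges C)"
proof (induction C rule: finite_ne_induct)
  case (singleton x)
  have "clique_edges {x} = {}" unfolding clique_edges_def by auto
  then show ?case using threshold.single by metis
next
  case (insert x C)
  have "clique_edges (insert x C) = clique_edges C \<union> {{x, u} | u. u \<in> C}"
    unfolding clique_edges_def using insert.hyps(3) by blast
  then show ?case using threshold.universal[OF insert.IH insert.hyps(3)] by simp
qed

lemma threshold_star: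
  assumes "finite D" "D \<noteq> {}" "c \<notin> D"
  shows "threshold (insert c D) {{c, u} | u. u \<in> D}"
proof -
  obtain d where "d \<in> D" using assms(2) by blast
  then have "threshold D {}"
    using threshold_union_isolated[OF assms(1) threshold.single[of d]] by (simp add: insert_absorb)
  then show ?thesis using threshold.universal[OF _ assms(3)] by fastforce
qed

lemma threshold_edge: "u \<noteq> v \<Longrightarrow> threshold {u, v} {{u, v}}"
  using threshold.universal[OF threshold.single, of u v] by (simp add: insert_commute)

section \<open>Covers by subgraphs\<close>

definition subgraph_cover ::
    "('a set \<Rightarrow> 'a set set \<Rightarrow> bool) \<Rightarrow> 'a set \<Rightarrow> 'a set set \<Rightarrow> nat \<Rightarrow> 'a set set \<Rightarrow> bool" where
  "subgraph_cover P V E k F \<longleftrightarrow>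
     (\<exists>HV HE. (\<forall>i<k. subgraph (HV i) (HE i) V E \<and> P (HV i) (HE i)) \<and> F \<subseteq> (\<Union>i<k. HE i))"

lemma subgraph_cover_edges_iff:
  "(\<exists>HV HE. (\<forall>i<k. subgraph (HV i) (HE i) V E \<and> P (HV i) (HE i)) \<and> (\<Union>i<k. HE i) = E)
     \<longleftrightarrow> subgraph_cover P V E k E"
  unfolding subgraph_cover_def subgraph_def by (metis (no_types, lifting) UN_least lessThan_iff subset_antisym)

lemma cobox_eq_Least: "cobox V E = (LEAST k. subgraph_cover cointerval V E k E)"
  unfolding cobox_def subgraph_cover_edges_iff ..

lemma cothdim_eq_Least: "cothdim V E = (LEAST k. subgraph_cover threshold V E k E)"
  unfolding cothdim_def subgraph_cover_edges_iff ..

lemma subgraph_cover_mono: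
  "subgraph_cover P V E k F \<Longrightarrow> (\<And>W F'. P W F' \<Longrightarrow> Q W F') \<Longrightarrow> subgraph_cover Q V E k F"
  unfolding subgraph_cover_def by blast

lemma subgraph_cover_two:
  assumes "subgraph W1 F1 V E" "P W1 F1" "subgraph W2 F2 V E" "P W2 F2" "F \<subseteq> F1 \<union> F2"
  shows "subgraph_cover P V E 2 F"
proof -
  let ?HV = "\<lambda>i::nat. if i = 0 then W1 else W2" and ?HE = "\<lambda>i::nat. if i = 0 then F1 else F2"
  have "(\<Union>i<2. ?HE i) = F1 \<union> F2" by (auto simp: numeral_2_eq_2 lessThan_Suc)
  then show ?thesis
    unfolding subgraph_cover_def using assms by (intro exI[of _ ?HV] exI[of _ ?HE]) simp
qed

lemma subgraph_cover_single_edges: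
  assumes "graph V E" "\<And>u v. u \<noteq> v \<Longrightarrow> P {u, v} {{u, v}}"
  shows "subgraph_cover P V E (card E) E"
proof -
  obtain f where f: "bij_betw f {..<card E} E"
    using ex_bij_betw_nat_finite[OF graph_finite_edges[OF assms(1)]] atLeast0LessThan by auto
  have "subgraph (f i) {f i} V E \<and> P (f i) {f i}" if "i < card E" for i
  proof -
    have "f i \<in> E" using f that by (auto dest: bij_betwE)
    then obtain u v where "u \<in> V" "v \<in> V" "u \<noteq> v" "f i = {u, v}"
      by (rule graph_edgeE[OF assms(1)])
    with \<open>f i \<in> E\<close> show ?thesis using assms(2) unfolding subgraph_def by auto
  qed
  moreover have "E \<subseteq> (\<Union>i<card E. {f i})" using f by (auto simp: bij_betw_def)
  ultimately show ?thesis
    unfolding subgraph_cover_def by (intro exI[of _ f] exI[of _ "\<lambda>i. {f i}"]) simp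
qed

lemma subgraph_cover_compose:
  assumes "subgraph_cover P V E k F"
    and "\<And>W F'. subgraph W F' V E \<Longrightarrow> P W F' \<Longrightarrow> subgraph_cover Q V E m F'"
  shows "subgraph_cover Q V E (m * k) F"
proof -
  obtain HV HE where H: "\<forall>i<k. subgraph (HV i) (HE i) V E \<and> P (HV i) (HE i)"
    and F: "F \<subseteq> (\<Union>i<k. HE i)"
    using assms(1) unfolding subgraph_cover_def by blast
  have "\<forall>i. \<exists>GV GE. i < k \<longrightarrow>
          (\<forall>j<m. subgraph (GV j) (GE j) V E \<and> Q (GV j) (GE j)) \<and> HE i \<subseteq> (\<Union>j<m. GE j)"
  proof
    fix i
    show "\<exists>GV GE. i < k \<longrightarrow>
          (\<forall>j<m. subgraph (GV j) (GE j) V E \<and> Q (GV j) (GE j)) \<and> HE i \<subseteq> (\<Union>j<m. GE j)"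
    proof (cases "i < k")
      case True
      then have "subgraph_cover Q V E m (HE i)" using H by (blast intro: assms(2))
      then show ?thesis unfolding subgraph_cover_def by blast
    qed simp
  qed
  from choice[OF this] obtain GV where "\<forall>i. \<exists>GE. i < k \<longrightarrow>
          (\<forall>j<m. subgraph (GV i j) (GE j) V E \<and> Q (GV i j) (GE j)) \<and> HE i \<subseteq> (\<Union>j<m. GE j)" ..
  from choice[OF this] obtain GE where G: "\<forall>i. i < k \<longrightarrow>
          (\<forall>j<m. subgraph (GV i j) (GE i j) V E \<and> Q (GV i j) (GE i j)) \<and> HE i \<subseteq> (\<Union>j<m. GE i j)" ..
  \<comment> \<open>The index \<open>n < m * k\<close> encodes the pair \<open>(n div m, n mod m)\<close>.\<close>
  let ?HV = "\<lambda>n. GV (n div m) (n mod m)" and ?HE = "\<lambda>n. GE (n div m) (n mod m)"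
  have "subgraph (?HV n) (?HE n) V E \<and> Q (?HV n) (?HE n)" if "n < m * k" for n
  proof -
    have "0 < m" using that by (cases m) auto
    then have "n div m < k" "n mod m < m" using that by (simp_all add: div_less_iff_less_mult mult.commute)
    then show ?thesis using G by simp
  qed
  moreover have "F \<subseteq> (\<Union>n<m * k. ?HE n)"
  proof
    fix e assume "e \<in> F"
    then obtain i where "i < k" "e \<in> HE i" using F by blast
    then obtain j where "j < m" "e \<in> GE i j" using G by blast
    have "i * m + j < m * k"
    proof -
      have "i * m + j < (i + 1) * m" using \<open>j < m\<close> by simp
      also have "\<dots> \<le> k * m" using \<open>i < k\<close> by (intro mult_right_mono) auto
      finally show ?thesis by (simp add: mult.commute)
    qed
    moreover have "?HE (i * m + j) = GE i j" using \<open>j < m\<close> by simp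
    ultimately show "e \<in> (\<Union>n<m * k. ?HE n)" using \<open>e \<in> GE i j\<close> by blast
  qed
  ultimately show ?thesis
    unfolding subgraph_cover_def by (intro exI[of _ ?HV] exI[of _ ?HE]) simp
qed

section \<open>Two threshold graphs cover a co-interval subgraph\<close>

lemma cointerval_pivots:
  assumes "graph W F" "cointerval W F" "F \<noteq> {}"
  obtains x y where "{x, y} \<in> F" and "\<forall>e\<in>F. \<exists>u v. e = {u, v} \<and> {u, y} \<in> F \<and> {v, x} \<in> F"
proof -
  obtain l r :: "'a \<Rightarrow> real" where lr: "\<forall>w\<in>W. l w \<le> r w"
    and adj: "\<forall>u\<in>W. \<forall>w\<in>W. u \<noteq> w \<longrightarrow> ({u, w} \<in> F \<longleftrightarrow> {l u..r u} \<inter> {l w..r w} = {})"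
    using assms(2) unfolding cointerval_def by blast
  have before_edge: "{u, v} \<in> F" if "u \<in> W" "v \<in> W" "r u < l v" for u v
  proof -
    have "u \<noteq> v" using that lr by force
    moreover have "{l u..r u} \<inter> {l v..r v} = {}" using that by auto
    ultimately show ?thesis using adj that by blast
  qed
  have edge_before: "\<exists>u v. e = {u, v} \<and> u \<in> W \<and> v \<in> W \<and> r u < l v" if e: "e \<in> F" for e
  proof -
    obtain u v where uv: "u \<in> W" "v \<in> W" "u \<noteq> v" "e = {u, v}"
      using graph_edgeE[OF assms(1) e] by blast
    then have "{l u..r u} \<inter> {l v..r v} = {}" using adj e by blast
    then have "r u < l v \<or> r v < l u" using lr uv by (auto simp: not_less)
    then show ?thesis using uv by (metis insert_commute)
  qed
  define P where "P = {u \<in> W. \<exists>v\<in>W. r u < l v}"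
  define Q where "Q = {v \<in> W. \<exists>u\<in>W. r u < l v}"
  have "finite W" using assms(1) unfolding graph_def by simp
  moreover obtain e0 where "e0 \<in> F" using assms(3) by blast
  then have "P \<noteq> {}" "Q \<noteq> {}" using edge_before unfolding P_def Q_def by blast+
  ultimately obtain x y where x: "x \<in> P" "\<forall>u\<in>P. r x \<le> r u" and y: "y \<in> Q" "\<forall>v\<in>Q. l v \<le> l y"
    using ex_is_arg_min_if_finite[of P r] ex_is_arg_min_if_finite[of Q "\<lambda>v. - l v"]
    unfolding P_def Q_def is_arg_min_linorder by auto
  have x_before: "r x < l v" and before_y: "r u < l y" if "u \<in> W" "v \<in> W" "r u < l v" for u v
    using that x(2) y(2) unfolding P_def Q_def by force+
  show ?thesis
  proof
    show "{x, y} \<in> F" using x y x_before before_y before_edge unfolding P_def Q_def by blast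
    show "\<forall>e\<in>F. \<exists>u v. e = {u, v} \<and> {u, y} \<in> F \<and> {v, x} \<in> F"
    proof
      fix e assume "e \<in> F"
      then obtain u v where uv: "e = {u, v}" "u \<in> W" "v \<in> W" "r u < l v" using edge_before by blast
      have "x \<in> W" "y \<in> W" using x y unfolding P_def Q_def by auto
      then have "{u, y} \<in> F" "{x, v} \<in> F" using uv x_before before_y before_edge by blast+
      then show "\<exists>u v. e = {u, v} \<and> {u, y} \<in> F \<and> {v, x} \<in> F"
        using uv(1) by (auto simp: insert_commute)
    qed
  qed
qed

lemma block_graph_two_threshold_cover:
  assumes bg: "block_graph V E" and xy: "{x, y} \<in> E" and FE: "F \<subseteq> E"
    and oriented: "\<And>e. e \<in> F \<Longrightarrow> \<exists>u v. e = {u, v} \<and> {u, y} \<in> E \<and> {v, x} \<in> E"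
  shows "subgraph_cover threshold V E 2 F"
proof -
  have g: "graph V E" using bg unfolding block_graph_def by simp
  have "x \<noteq> y" using g xy by (rule graph_edge_neq)
  define N where "N z = {w \<in> V. {z, w} \<in> E}" for z
  have N_iff: "w \<in> N z \<longleftrightarrow> {z, w} \<in> E" for z w
    unfolding N_def using graph_edge_subset[OF g] by auto
  have not_in_N: "z \<notin> N z" for z
    unfolding N_iff using graph_edge_neq[OF g] by blast
  have finite_N: "finite (N z)" for z
    using g unfolding N_def graph_def by simp
  define C where "C = insert y {w. {w, x} \<in> E \<and> {w, y} \<in> E}"
  have C_N: "C \<subseteq> N x" unfolding C_def using xy by (auto simp: N_iff insert_commute)
  have C_clique: "clique_edges C \<subseteq> E"
  proof
    fix e assume "e \<in> clique_edges C"
    then obtain u w where e: "e = {u, w}" "u \<in> C" "w \<in> C" "u \<noteq> w"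
      unfolding clique_edges_def by blast
    consider "u = y" | "w = y" | "u \<noteq> y" "w \<noteq> y" by blast
    then show "e \<in> E"
    proof cases
      case 1
      then show ?thesis using e unfolding C_def by (auto simp: insert_commute)
    next
      case 2
      then show ?thesis using e unfolding C_def by auto
    next
      case 3
      then have edges: "{u, x} \<in> E" "{x, w} \<in> E" "{w, y} \<in> E" "{y, u} \<in> E"
        using e unfolding C_def by (auto simp: insert_commute)
      then have "distinct [u, x, w, y]"
        using 3 e(4) \<open>x \<noteq> y\<close> graph_edge_neq[OF g] by auto
      then show ?thesis using e(1) bg edges by (blast intro: block_graph_square_chord)
    qed
  qed
  let ?F1 = "clique_edges C \<union> {{x, u} | u. u \<in> N x}" and ?F2 = "{{y, u} | u. u \<in> N y}"
  have "threshold (C \<union> N x) (clique_edges C)"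
    using finite_N C_N by (intro threshold_union_isolated threshold_clique) (auto simp: C_def finite_subset)
  moreover have "C \<union> N x = N x" using C_N by blast
  ultimately have T1: "threshold (insert x (N x)) ?F1"
    using threshold.universal[OF _ not_in_N] by simp
  have "x \<in> N y" using xy by (simp add: N_iff insert_commute)
  then have T2: "threshold (insert y (N y)) ?F2"
    using finite_N not_in_N by (intro threshold_star) auto
  have S1: "subgraph (insert x (N x)) ?F1 V E"
    using C_clique C_N graph_edge_subset[OF g xy] unfolding subgraph_def clique_edges_def
    by (auto simp: N_iff N_def)
  have S2: "subgraph (insert y (N y)) ?F2 V E"
    using graph_edge_subset[OF g xy] unfolding subgraph_def by (auto simp: N_iff N_def)
  have "F \<subseteq> ?F1 \<union> ?F2"
  proof
    fix e assume "e \<in> F"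
    then obtain u v where uv: "e = {u, v}" "{u, y} \<in> E" "{v, x} \<in> E" using oriented by blast
    consider "u = x" | "v = y" | "u \<noteq> x" "v \<noteq> y" by blast
    then show "e \<in> ?F1 \<union> ?F2"
    proof cases
      case 1
      then show ?thesis using uv by (auto simp: N_iff insert_commute)
    next
      case 2
      then show ?thesis using uv by (auto simp: N_iff insert_commute)
    next
      case 3
      \<comment> \<open>\<open>u v x y\<close> is a 4-cycle, so both its chords are edges.\<close>
      have "{u, v} \<in> E" using \<open>e \<in> F\<close> FE uv(1) by blast
      moreover have "{x, y} \<in> E" "{y, u} \<in> E" using xy uv(2) by (simp_all add: insert_commute)
      moreover have distinct: "distinct [u, v, x, y]"
        using 3 calculation uv \<open>x \<noteq> y\<close> graph_edge_neq[OF g] by auto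
      ultimately have "{u, x} \<in> E" "{v, y} \<in> E"
        using bg uv(3) block_graph_square_chord[of V E u v x y] block_graph_square_chord[of V E v x y u]
        by (auto simp: insert_commute)
      then have "u \<in> C" "v \<in> C" using uv unfolding C_def by (auto simp: insert_commute)
      then have "e \<in> clique_edges C"
        using uv(1) distinct unfolding clique_edges_def by auto
      then show ?thesis by blast
    qed
  qed
  then show ?thesis using S1 T1 S2 T2 by (rule subgraph_cover_two[rotated 4])
qed

lemma block_graph_cointerval_two_threshold_cover:
  assumes bg: "block_graph V E" and "V \<noteq> {}" and sub: "subgraph W F V E" and "cointerval W F"
  shows "subgraph_cover threshold V E 2 F"
proof (cases "F = {}")
  case True
  obtain w where "w \<in> V" using \<open>V \<noteq> {}\<close> by blast
  then have "subgraph {w} {} V E" unfolding subgraph_def by simp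
  then show ?thesis using True threshold.single by (intro subgraph_cover_two) auto
next
  case False
  have g: "graph V E" using bg unfolding block_graph_def by simp
  then have "graph W F" using sub by (rule graph_subgraph)
  then obtain x y where xy: "{x, y} \<in> F"
    and oriented: "\<forall>e\<in>F. \<exists>u v. e = {u, v} \<and> {u, y} \<in> F \<and> {v, x} \<in> F"
    using \<open>cointerval W F\<close> False by (rule cointerval_pivots)
  have FE: "F \<subseteq> E" using sub unfolding subgraph_def by simp
  show ?thesis
  proof (rule block_graph_two_threshold_cover[OF bg _ FE])
    show "{x, y} \<in> E" using xy FE by blast
    fix e assume "e \<in> F"
    then obtain u v where "e = {u, v}" "{u, y} \<in> F" "{v, x} \<in> F" using oriented by blast
    then show "\<exists>u v. e = {u, v} \<and> {u, y} \<in> E \<and> {v, x} \<in> E" using FE by blast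
  qed
qed

theorem proposition15:
  fixes V :: "'a set" and E :: "'a set set"
  assumes "graph V E" and "block_graph V E"
  shows "cobox V E \<le> cothdim V E \<and> cothdim V E \<le> 2 * cobox V E"
proof
  have "subgraph_cover threshold V E (card E) E"
    using assms(1) threshold_edge by (rule subgraph_cover_single_edges)
  then have "subgraph_cover threshold V E (cothdim V E) E"
    unfolding cothdim_eq_Least by (rule LeastI)
  then have cointerval_cover: "subgraph_cover cointerval V E (cothdim V E) E"
    using threshold_cointerval by (rule subgraph_cover_mono)
  then show "cobox V E \<le> cothdim V E"
    unfolding cobox_eq_Least by (rule Least_le)
  show "cothdim V E \<le> 2 * cobox V E"
  proof (cases "E = {}")
    case True
    then have "subgraph_cover threshold V E 0 E" unfolding subgraph_cover_def by simp
    then show ?thesis unfolding cothdim_eq_Least using Least_le by fastforce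
  next
    case False
    then obtain e where "e \<in> E" by blast
    then obtain u v where "u \<in> V" by (rule graph_edgeE[OF assms(1)])
    then have "V \<noteq> {}" by blast
    have "subgraph_cover cointerval V E (cobox V E) E"
      unfolding cobox_eq_Least using cointerval_cover by (rule LeastI)
    then have "subgraph_cover threshold V E (2 * cobox V E) E"
      using block_graph_cointerval_two_threshold_cover[OF assms(2) \<open>V \<noteq> {}\<close>]
      by (rule subgraph_cover_compose)
    then show ?thesis unfolding cothdim_eq_Least by (rule Least_le)
  qed
qed

end
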